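(* Let $(E\to M,\rho,\langle\cdot,\cdot\rangle,\circ)$ be a Courant algebroid and $(\mathbf I,\mathbf J,\mathbf K)$ an almost hypercomplex structure on $E$. Then each of the following formulas defines a hypercomplex connection: $$\nabla_XY=-\tfrac12\mathbf K\big(\mathbf JY\circ\mathbf IX-\mathbf J(Y\circ\mathbf IX)-\mathbf I(\mathbf JY\circ X)+\mathbf J\mathbf I(Y\circ X)\big),$$ $$\nabla'_XY=-\tfrac12\mathbf I\big(\mathbf KY\circ\mathbf JX-\mathbf K(Y\circ\mathbf JX)-\mathbf J(\mathbf KY\circ X)+\mathbf K\mathbf J(Y\circ X)\big),$$ $$\nabla''_XY=-\tfrac12\mathbf J\big(\mathbf IY\circ\mathbf KX-\mathbf I(Y\circ\mathbf KX)-\mathbf K(\mathbf IY\circ X)+\mathbf I\mathbf K(Y\circ X)\big),$$ for $X,Y\in\Gamma(E)$.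
   Context: A Courant algebroid $(E\to M,\rho,\langle\cdot,\cdot\rangle,\circ)$ consists of a real vector bundle $E\to M$ over a smooth manifold, a nondegenerate symmetric fiberwise bilinear pairing $\langle\cdot,\cdot\rangle$ on $E$, a vector bundle map $\rho:E\to TM$ (the anchor), and an $\mathbb R$-bilinear operation $\circ$ on $\Gamma(E)$ (the Dorfman bracket) such that for all $f\in C^\infty(M)$, $x,y,z\in\Gamma(E)$: $x\circ(y\circ z)=(x\circ y)\circ z+y\circ(x\circ z)$; $\rho(x\circ y)=[\rho(x),\rho(y)]$; $x\circ(fy)=(\rho(x)f)y+f(x\circ y)$; $x\circ y+y\circ x=2D\langle x,y\rangle$; $(Df)\circ x=0$; $\rho(x)\langle y,z\rangle=\langle x\circ y,z\rangle+\langle y,x\circ z\rangle$. Here $D:C^\infty(M)\to\Gamma(E)$ is the $\mathbb R$-linear map defined by $\langle Df,x\rangle=\tfrac12\rho(x)f$. An almost hypercomplex structure on $E$ is a triple $(\mathbf I,\mathbf J,\mathbf K)$ of vector bundle endomorphisms of $E$ over $\mathrm{id}_M$, each orthogonal for $\langle\cdot,\cdot\rangle$, with $\mathbf I^2=\mathbf J^2=\mathbf K^2=\mathbf I\mathbf J\mathbf K=-1$. Given an almost hypercomplex structure, for $f\in C^\infty(M)$ and $X,Y\in\Gamma(E)$ set $\Delta_f(X,Y)=\langle X,Y\rangle Df+\langle\mathbf IX,Y\rangle\mathbf I Df+\langle\mathbf JX,Y\rangle\mathbf JDf+\langle\mathbf KX,Y\rangle\mathbf KDf$. A hypercomplex connection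 is an $\mathbb R$-bilinear map $\Gamma(E)\times\Gamma(E)\to\Gamma(E)$, $(X,Y)\mapsto\nabla_XY$, with $\nabla_{fX}Y=f\nabla_XY$ and $\nabla_X(fY)=(\rho(X)f)Y+f\nabla_XY-\Delta_f(X,Y)$ for all $f\in C^\infty(M)$, $X,Y\in\Gamma(E)$. *)

theory Defs
  imports Complex_Main
begin

text \<open>Algebraic (Roytenberg-style) rendering of a Courant algebroid.
  'f plays the role of the commutative real algebra C^\<infinity>(M);
  'e plays the role of the C^\<infinity>(M)-module of sections \<Gamma>(E);
  sm is the multiplication of sections by functions.
  Vector bundle maps over id_M correspond to C^\<infinity>(M)-linear maps of sections.\<close>

definition func_module ::
  "('f::{comm_ring_1,real_algebra_1} \<Rightarrow> 'e::ab_group_add \<Rightarrow> 'e) \<Rightarrow> bool" where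
  "func_module sm \<longleftrightarrow>
     (\<forall>f x y. sm f (x + y) = sm f x + sm f y) \<and>
     (\<forall>f g x. sm (f + g) x = sm f x + sm g x) \<and>
     (\<forall>f g x. sm (f * g) x = sm f (sm g x)) \<and>
     (\<forall>x. sm 1 x = x)"

definition courant_algebroid ::
  "('f::{comm_ring_1,real_algebra_1} \<Rightarrow> 'e::ab_group_add \<Rightarrow> 'e) \<Rightarrow>
   ('e \<Rightarrow> 'e \<Rightarrow> 'f) \<Rightarrow> ('e \<Rightarrow> 'f \<Rightarrow> 'f) \<Rightarrow> ('e \<Rightarrow> 'e \<Rightarrow> 'e) \<Rightarrow>
   ('f \<Rightarrow> 'e) \<Rightarrow> bool" where
  "courant_algebroid sm ip rho dorf D \<longleftrightarrow>
     func_module sm \<and>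
     \<comment> \<open>pairing: symmetric, C-bilinear, nondegenerate\<close>
     (\<forall>x y. ip x y = ip y x) \<and>
     (\<forall>x y z. ip (x + y) z = ip x z + ip y z) \<and>
     (\<forall>f x y. ip (sm f x) y = f * ip x y) \<and>
     (\<forall>x. (\<forall>y. ip x y = 0) \<longrightarrow> x = 0) \<and>
     \<comment> \<open>anchor: a C-linear map to vector fields (R-linear derivations of 'f)\<close>
     (\<forall>x y f. rho (x + y) f = rho x f + rho y f) \<and>
     (\<forall>g x f. rho (sm g x) f = g * rho x f) \<and>
     (\<forall>x f g. rho x (f + g) = rho x f + rho x g) \<and>
     (\<forall>x a f. rho x (a *\<^sub>R f) = a *\<^sub>R rho x f) \<and>
     (\<forall>x f g. rho x (f * g) = rho x f * g + f * rho x g) \<and>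
     \<comment> \<open>Dorfman bracket: R-bilinear\<close>
     (\<forall>x y z. dorf (x + y) z = dorf x z + dorf y z) \<and>
     (\<forall>x y z. dorf x (y + z) = dorf x y + dorf x z) \<and>
     (\<forall>a x y. dorf (sm (of_real a) x) y = sm (of_real a) (dorf x y)) \<and>
     (\<forall>a x y. dorf x (sm (of_real a) y) = sm (of_real a) (dorf x y)) \<and>
     \<comment> \<open>D defined by <Df,x> = 1/2 rho(x) f\<close>
     (\<forall>f x. ip (D f) x = of_real (1/2) * rho x f) \<and>
     \<comment> \<open>Courant algebroid axioms\<close>
     (\<forall>x y z. dorf x (dorf y z) = dorf (dorf x y) z + dorf y (dorf x z)) \<and>
     (\<forall>x y f. rho (dorf x y) f = rho x (rho y f) - rho y (rho x f)) \<and>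
     (\<forall>x f y. dorf x (sm f y) = sm (rho x f) y + sm f (dorf x y)) \<and>
     (\<forall>x y. dorf x y + dorf y x = sm (of_real 2) (D (ip x y))) \<and>
     (\<forall>f x. dorf (D f) x = 0) \<and>
     (\<forall>x y z. rho x (ip y z) = ip (dorf x y) z + ip y (dorf x z))"

definition bundle_endo ::
  "('f::{comm_ring_1,real_algebra_1} \<Rightarrow> 'e::ab_group_add \<Rightarrow> 'e) \<Rightarrow> ('e \<Rightarrow> 'e) \<Rightarrow> bool" where
  "bundle_endo sm A \<longleftrightarrow> (\<forall>x y. A (x + y) = A x + A y) \<and> (\<forall>f x. A (sm f x) = sm f (A x))"

definition orthogonal_endo :: "('e \<Rightarrow> 'e \<Rightarrow> 'f) \<Rightarrow> ('e \<Rightarrow> 'e) \<Rightarrow> bool" where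
  "orthogonal_endo ip A \<longleftrightarrow> (\<forall>x y. ip (A x) (A y) = ip x y)"

definition almost_hypercomplex ::
  "('f::{comm_ring_1,real_algebra_1} \<Rightarrow> 'e::ab_group_add \<Rightarrow> 'e) \<Rightarrow> ('e \<Rightarrow> 'e \<Rightarrow> 'f) \<Rightarrow>
   ('e \<Rightarrow> 'e) \<Rightarrow> ('e \<Rightarrow> 'e) \<Rightarrow> ('e \<Rightarrow> 'e) \<Rightarrow> bool" where
  "almost_hypercomplex sm ip I J K \<longleftrightarrow>
     bundle_endo sm I \<and> bundle_endo sm J \<and> bundle_endo sm K \<and>
     orthogonal_endo ip I \<and> orthogonal_endo ip J \<and> orthogonal_endo ip K \<and>
     (\<forall>x. I (I x) = - x) \<and> (\<forall>x. J (J x) = - x) \<and> (\<forall>x. K (K x) = - x) \<and>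
     (\<forall>x. I (J (K x)) = - x)"

definition Delta ::
  "('f::{comm_ring_1,real_algebra_1} \<Rightarrow> 'e::ab_group_add \<Rightarrow> 'e) \<Rightarrow> ('e \<Rightarrow> 'e \<Rightarrow> 'f) \<Rightarrow>
   ('f \<Rightarrow> 'e) \<Rightarrow> ('e \<Rightarrow> 'e) \<Rightarrow> ('e \<Rightarrow> 'e) \<Rightarrow> ('e \<Rightarrow> 'e) \<Rightarrow> 'f \<Rightarrow> 'e \<Rightarrow> 'e \<Rightarrow> 'e" where
  "Delta sm ip D I J K f X Y =
     sm (ip X Y) (D f) + sm (ip (I X) Y) (I (D f)) + sm (ip (J X) Y) (J (D f))
     + sm (ip (K X) Y) (K (D f))"

definition hypercomplex_connection ::
  "('f::{comm_ring_1,real_algebra_1} \<Rightarrow> 'e::ab_group_add \<Rightarrow> 'e) \<Rightarrow> ('e \<Rightarrow> 'e \<Rightarrow> 'f) \<Rightarrow>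
   ('e \<Rightarrow> 'f \<Rightarrow> 'f) \<Rightarrow> ('f \<Rightarrow> 'e) \<Rightarrow> ('e \<Rightarrow> 'e) \<Rightarrow> ('e \<Rightarrow> 'e) \<Rightarrow> ('e \<Rightarrow> 'e) \<Rightarrow>
   ('e \<Rightarrow> 'e \<Rightarrow> 'e) \<Rightarrow> bool" where
  "hypercomplex_connection sm ip rho D I J K nabla \<longleftrightarrow>
     \<comment> \<open>R-bilinear\<close>
     (\<forall>X Y Z. nabla (X + Y) Z = nabla X Z + nabla Y Z) \<and>
     (\<forall>X Y Z. nabla X (Y + Z) = nabla X Y + nabla X Z) \<and>
     (\<forall>a X Y. nabla (sm (of_real a) X) Y = sm (of_real a) (nabla X Y)) \<and>
     (\<forall>a X Y. nabla X (sm (of_real a) Y) = sm (of_real a) (nabla X Y)) \<and>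
     \<comment> \<open>connection rules\<close>
     (\<forall>f X Y. nabla (sm f X) Y = sm f (nabla X Y)) \<and>
     (\<forall>f X Y. nabla X (sm f Y) = sm (rho X f) Y + sm f (nabla X Y) - Delta sm ip D I J K f X Y)"

end

theory Submission imports Defs begin

(* Additivity and C-linearity in X are immediate from
   the bilinearity of the Dorfman bracket o and its right Leibniz rule.  The substance
   is the Leibniz rule in Y: using the left Leibniz rule
     (fx) o y = f (x o y) - (rho(y) f) x + 2 <x,y> Df
   each of the four brackets produces a defect term; after applying K and the
   quaternion relations (JK = I, KJ = -I, ...) these defects assemble exactly into
   (rho(X) f) Y - Delta_f(X,Y).  Since the two other formulas are obtained from the
   first by the cyclic substitution (I,J,K) -> (J,K,I) -> (K,I,J), which preserves
   both the almost hypercomplex axioms and Delta, the theorem follows by applying the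
   single result three times. *)

locale section_module =
  fixes sm :: "'f::{comm_ring_1,real_algebra_1} \<Rightarrow> 'e::ab_group_add \<Rightarrow> 'e"
  assumes module: "func_module sm"
begin

lemma sm_add_r: "sm f (x + y) = sm f x + sm f y"
  and sm_add_l: "sm (f + g) x = sm f x + sm g x"
  and sm_mult: "sm (f * g) x = sm f (sm g x)"
  and sm_one: "sm 1 x = x"
  using module[unfolded func_module_def] by blast+

lemma sm_zero_r: "sm f 0 = 0"
  using sm_add_r[of f 0 0] by simp

lemma sm_minus_r: "sm f (- x) = - sm f x"
  using sm_add_r[of f x "- x"] by (simp add: sm_zero_r add_eq_0_iff)

lemma sm_diff_r: "sm f (x - y) = sm f x - sm f y"
  using sm_add_r[of f x "- y"] by (simp add: sm_minus_r)

lemma sm_minus_l: "sm (- f) x = - sm f x"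
proof -
  have "sm (- f) x + sm f x = sm 0 x" by (simp flip: sm_add_l)
  also have "\<dots> = 0" using sm_add_l[of 0 0 x] by simp
  finally show ?thesis by (simp add: add_eq_0_iff)
qed

lemma sm_comm: "sm f (sm g x) = sm g (sm f x)"
  by (metis sm_mult mult.commute)

lemma sm_two: "sm 2 x = x + x"
  by (metis one_add_one sm_add_l sm_one)

text \<open>The normalizing factor -1/2 of the connections cancels the factor 2 of the
  symmetric part of the Dorfman bracket.\<close>
lemma sm_neg_half_two: "sm (of_real (-1/2)) (sm 2 z) = - z"
proof -
  have "(of_real (-1/2) :: 'f) * 2 = of_real ((-1/2) * 2)"
    by (simp only: of_real_mult of_real_numeral)
  then have "(of_real (-1/2) :: 'f) * 2 = - 1" by simp
  then show ?thesis
    using sm_mult[of "of_real (-1/2)" 2 z] by (simp add: sm_minus_l sm_one)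
qed

end

lemma bundle_endo_add: "bundle_endo sm A \<Longrightarrow> A (x + y) = A x + A y"
  and bundle_endo_sm: "bundle_endo sm A \<Longrightarrow> A (sm f x) = sm f (A x)"
  unfolding bundle_endo_def by blast+

lemma bundle_endo_minus: "bundle_endo sm A \<Longrightarrow> A (- x) = - A x"
  using bundle_endo_add[of sm A x "- x"] bundle_endo_add[of sm A 0 0]
  by (simp add: add_eq_0_iff)

lemma bundle_endo_diff: "bundle_endo sm A \<Longrightarrow> A (x - y) = A x - A y"
  using bundle_endo_add[of sm A x "- y"] bundle_endo_minus[of sm A y] by simp

section \<open>Consequences of the Courant algebroid axioms\<close>

text \<open>The named axioms below are exactly those used later.\<close>
locale courant =
  fixes sm :: "'f::{comm_ring_1,real_algebra_1} \<Rightarrow> 'e::ab_group_add \<Rightarrow> 'e"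
    and ip :: "'e \<Rightarrow> 'e \<Rightarrow> 'f" and rho :: "'e \<Rightarrow> 'f \<Rightarrow> 'f"
    and dorf :: "'e \<Rightarrow> 'e \<Rightarrow> 'e" and D :: "'f \<Rightarrow> 'e"
  assumes CA: "courant_algebroid sm ip rho dorf D"

sublocale courant \<subseteq> section_module sm
  using CA unfolding courant_algebroid_def by unfold_locales blast

context courant
begin

lemma ip_sym: "ip x y = ip y x"
  and ip_add_l: "ip (x + y) z = ip x z + ip y z"
  and ip_sm_l: "ip (sm f x) y = f * ip x y"
  and rho_mult: "rho x (f * g) = rho x f * g + f * rho x g"
  and dorf_add_l: "dorf (x + y) z = dorf x z + dorf y z"
  and dorf_add_r: "dorf x (y + z) = dorf x y + dorf x z"
  and dorf_real_l: "dorf (sm (of_real a) x) y = sm (of_real a) (dorf x y)"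
  and dorf_real_r: "dorf x (sm (of_real a) y) = sm (of_real a) (dorf x y)"
  and ip_D: "ip (D f) x = of_real (1/2) * rho x f"
  and dorf_leibniz: "dorf x (sm f y) = sm (rho x f) y + sm f (dorf x y)"
  and dorf_symm: "dorf x y + dorf y x = sm (of_real 2) (D (ip x y))"
  using CA unfolding courant_algebroid_def by - (elim conjE; iprover)+

lemma ip_nondeg: "(\<And>y. ip x y = 0) \<Longrightarrow> x = 0"
  using CA unfolding courant_algebroid_def by (elim conjE) iprover

lemma ip_minus_l: "ip (- x) z = - ip x z"
  using ip_add_l[of x "- x" z] ip_add_l[of 0 0 z] by (simp add: add_eq_0_iff)

lemma ip_minus_r: "ip z (- x) = - ip z x"
  by (metis ip_minus_l ip_sym)

lemma ip_diff_l: "ip (x - y) z = ip x z - ip y z"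
  using ip_add_l[of x "- y" z] by (simp add: ip_minus_l)

text \<open>D is a derivation: D(fg) = f Dg + g Df, tested against the nondegenerate pairing.\<close>
lemma D_mult: "D (f * g) = sm f (D g) + sm g (D f)"
proof -
  have "ip (D (f * g) - (sm f (D g) + sm g (D f))) z = 0" for z
    by (simp add: ip_diff_l ip_add_l ip_sm_l ip_D rho_mult algebra_simps)
  then show ?thesis using ip_nondeg by (metis eq_iff_diff_eq_0)
qed

text \<open>The Leibniz rule in the first argument of the Dorfman bracket,
  obtained from the right Leibniz rule through the symmetric part 2 D(x,y).\<close>
lemma dorf_leibniz_left:
  "dorf (sm f x) y = sm f (dorf x y) - sm (rho y f) x + sm 2 (sm (ip x y) (D f))"
proof -
  have left: "dorf (sm f x) y = sm (of_real 2) (D (ip (sm f x) y)) - dorf y (sm f x)"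
    using dorf_symm[of "sm f x" y] by (simp add: eq_diff_eq)
  have swap: "dorf y x = sm (of_real 2) (D (ip x y)) - dorf x y"
    using dorf_symm[of y x] ip_sym[of y x] by (simp add: eq_diff_eq)
  show ?thesis
    unfolding left dorf_leibniz swap ip_sm_l D_mult of_real_numeral sm_two
    by (simp add: sm_add_r sm_diff_r sm_add_l algebra_simps)
qed

end

section \<open>Quaternion relations of an almost hypercomplex structure\<close>

locale hypercomplex =
  fixes sm :: "'f::{comm_ring_1,real_algebra_1} \<Rightarrow> 'e::ab_group_add \<Rightarrow> 'e"
    and ip :: "'e \<Rightarrow> 'e \<Rightarrow> 'f" and I J K :: "'e \<Rightarrow> 'e"
  assumes AH: "almost_hypercomplex sm ip I J K"
begin

lemma endo_I: "bundle_endo sm I" and endo_J: "bundle_endo sm J" and endo_K: "bundle_endo sm K"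
  and orth_I: "orthogonal_endo ip I" and orth_J: "orthogonal_endo ip J"
  and orth_K: "orthogonal_endo ip K"
  and II: "I (I x) = - x" and JJ: "J (J x) = - x" and KK: "K (K x) = - x"
  and IJK: "I (J (K x)) = - x"
  using AH unfolding almost_hypercomplex_def by - (elim conjE; iprover)+

lemmas I_linear = bundle_endo_add[OF endo_I] bundle_endo_sm[OF endo_I]
  bundle_endo_minus[OF endo_I] bundle_endo_diff[OF endo_I]
lemmas J_linear = bundle_endo_add[OF endo_J] bundle_endo_sm[OF endo_J]
  bundle_endo_minus[OF endo_J] bundle_endo_diff[OF endo_J]
lemmas K_linear = bundle_endo_add[OF endo_K] bundle_endo_sm[OF endo_K]
  bundle_endo_minus[OF endo_K] bundle_endo_diff[OF endo_K]

lemma JK: "J (K x) = I x"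
proof -
  have "- J (K x) = I (I (J (K x)))" by (simp add: II)
  also have "\<dots> = - I x" by (simp add: IJK I_linear)
  finally show ?thesis by simp
qed

lemma JI: "J (I x) = - K x"
  using JJ[of "K x"] by (simp add: JK)

lemma IK: "I (K x) = - J x"
  using JK[of "K x"] by (simp add: KK J_linear)

lemma IJ: "I (J x) = K x"
proof -
  have "J x = - I (K x)" by (simp add: IK)
  then show ?thesis by (simp add: I_linear II)
qed

lemma KI: "K (I x) = J x"
proof -
  have "I (K (I x)) = K x" using IK[of "I x"] JI[of x] by simp
  then have "- K (I x) = I (K x)" by (metis II)
  then show ?thesis by (simp add: IK)
qed

lemma KJ: "K (J x) = - I x"
proof -
  have "J (K (J x)) = K x" using JK[of "J x"] IJ[of x] by simp
  then have "- K (J x) = I x" by (metis JJ JK)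
  then show ?thesis by (metis minus_minus)
qed

lemma hypercomplex_rotate: "almost_hypercomplex sm ip J K I"
proof -
  have "J (K (I x)) = - x" for x by (simp add: JK II)
  then show ?thesis
    unfolding almost_hypercomplex_def
    using endo_I endo_J endo_K orth_I orth_J orth_K II JJ KK by blast
qed

end

text \<open>Delta_f is symmetric in I, J, K; in particular it is invariant under rotation.\<close>
lemma Delta_rotate: "Delta sm ip D I J K = Delta sm ip D J K I"
  by (intro ext) (simp add: Delta_def add_ac)

text \<open>Hence being a hypercomplex connection, which depends on (I, J, K) only through
  Delta, is invariant under rotating the structure.\<close>
lemma hypercomplex_connection_rotate:
  "hypercomplex_connection sm ip rho D I J K nabla \<Longrightarrow>
   hypercomplex_connection sm ip rho D J K I nabla"
  unfolding hypercomplex_connection_def Delta_rotate[of sm ip D I J K] .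

locale courant_hypercomplex = courant sm ip rho dorf D + hypercomplex sm ip I J K
  for sm :: "'f::{comm_ring_1,real_algebra_1} \<Rightarrow> 'e::ab_group_add \<Rightarrow> 'e"
    and ip rho dorf D I J K
begin

text \<open>Two consequences of orthogonality, used to identify the defect with Delta.\<close>
lemma ip_JY_IX: "ip (J Y) (I X) = ip (K X) Y"
proof -
  have "ip (J Y) (I X) = ip (J (J Y)) (J (I X))"
    using orth_J unfolding orthogonal_endo_def by simp
  also have "\<dots> = ip Y (K X)" by (simp add: JJ JI ip_minus_l ip_minus_r)
  finally show ?thesis by (simp add: ip_sym)
qed

lemma ip_JY_X: "ip (J Y) X = - ip (J X) Y"
proof -
  have "ip (J Y) X = ip (J (J Y)) (J X)"
    using orth_J unfolding orthogonal_endo_def by simp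
  also have "\<dots> = - ip Y (J X)" by (simp add: JJ ip_minus_l)
  finally show ?thesis by (simp add: ip_sym)
qed

definition twisted :: "'e \<Rightarrow> 'e \<Rightarrow> 'e" where
  "twisted X Y = dorf (J Y) (I X) - J (dorf Y (I X)) - I (dorf (J Y) X) + J (I (dorf Y X))"

definition nabla :: "'e \<Rightarrow> 'e \<Rightarrow> 'e" where
  "nabla X Y = sm (of_real (-1/2)) (K (twisted X Y))"

lemma twisted_add_l: "twisted (X + X') Y = twisted X Y + twisted X' Y"
  and twisted_add_r: "twisted X (Y + Y') = twisted X Y + twisted X Y'"
  unfolding twisted_def I_linear J_linear dorf_add_l dorf_add_r by (simp_all add: algebra_simps)

lemma twisted_real_r: "twisted X (sm (of_real a) Y) = sm (of_real a) (twisted X Y)"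
  unfolding twisted_def I_linear J_linear dorf_real_l dorf_real_r sm_add_r sm_diff_r ..

text \<open>C-linearity in X: the derivative terms of the right Leibniz rule cancel in pairs.\<close>
lemma twisted_sm_l: "twisted (sm f X) Y = sm f (twisted X Y)"
  unfolding twisted_def I_linear J_linear dorf_leibniz sm_add_r sm_diff_r
  by (simp add: algebra_simps)

text \<open>The defect of the Leibniz rule in Y, collected from the four brackets.\<close>
definition leibniz_defect :: "'f \<Rightarrow> 'e \<Rightarrow> 'e \<Rightarrow> 'e" where
  "leibniz_defect f X Y = sm (rho X f) (K Y) + sm (ip (J Y) (I X)) (D f)
     - sm (ip Y (I X)) (J (D f)) - sm (ip (J Y) X) (I (D f)) + sm (ip Y X) (J (I (D f)))"

lemma twisted_sm_r: "twisted X (sm f Y) = sm f (twisted X Y) + sm 2 (leibniz_defect f X Y)"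
proof -
  have b1: "dorf (J (sm f Y)) (I X) = sm f (dorf (J Y) (I X)) - sm (rho (I X) f) (J Y)
                + sm 2 (sm (ip (J Y) (I X)) (D f))"
    by (simp add: J_linear dorf_leibniz_left)
  have b2: "J (dorf (sm f Y) (I X)) = sm f (J (dorf Y (I X))) - sm (rho (I X) f) (J Y)
                + sm 2 (sm (ip Y (I X)) (J (D f)))"
    by (simp add: J_linear dorf_leibniz_left)
  have b3: "I (dorf (J (sm f Y)) X) = sm f (I (dorf (J Y) X)) - sm (rho X f) (K Y)
                + sm 2 (sm (ip (J Y) X) (I (D f)))"
    by (simp add: J_linear I_linear dorf_leibniz_left IJ)
  have b4: "J (I (dorf (sm f Y) X)) = sm f (J (I (dorf Y X))) + sm (rho X f) (K Y)
                + sm 2 (sm (ip Y X) (J (I (D f))))"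
    by (simp add: J_linear I_linear dorf_leibniz_left JI sm_minus_r)
  show ?thesis
    unfolding twisted_def b1 b2 b3 b4 leibniz_defect_def sm_two sm_add_r sm_diff_r
    by (simp add: algebra_simps)
qed

lemma K_leibniz_defect: "K (leibniz_defect f X Y) = Delta sm ip D I J K f X Y - sm (rho X f) Y"
  unfolding leibniz_defect_def Delta_def ip_JY_IX ip_JY_X[of Y X]
  by (simp add: K_linear KK KJ KI JI sm_minus_r sm_minus_l ip_sym[of Y X] ip_sym[of Y "I X"]
      algebra_simps)

lemma nabla_sm_r: "nabla X (sm f Y) = sm (rho X f) Y + sm f (nabla X Y) - Delta sm ip D I J K f X Y"
proof -
  have "nabla X (sm f Y) = sm f (nabla X Y) + sm (of_real (-1/2)) (sm 2 (K (leibniz_defect f X Y)))"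
    unfolding nabla_def twisted_sm_r K_linear sm_add_r sm_comm[of "of_real (-1/2)" f] ..
  also have "\<dots> = sm f (nabla X Y) - K (leibniz_defect f X Y)"
    unfolding sm_neg_half_two by simp
  finally show ?thesis by (simp add: K_leibniz_defect algebra_simps)
qed

lemma nabla_connection: "hypercomplex_connection sm ip rho D I J K nabla"
  unfolding hypercomplex_connection_def
proof (intro conjI allI)
  fix X X' Y Y' :: 'e and f :: 'f and a :: real
  show "nabla (X + X') Y = nabla X Y + nabla X' Y"
    and "nabla X (Y + Y') = nabla X Y + nabla X Y'"
    unfolding nabla_def twisted_add_l twisted_add_r K_linear sm_add_r by (rule refl)+
  show "nabla (sm f X) Y = sm f (nabla X Y)"
    and "nabla (sm (of_real a) X) Y = sm (of_real a) (nabla X Y)"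
    unfolding nabla_def twisted_sm_l K_linear by (rule sm_comm)+
  show "nabla X (sm (of_real a) Y) = sm (of_real a) (nabla X Y)"
    unfolding nabla_def twisted_real_r K_linear by (rule sm_comm)
  show "nabla X (sm f Y) = sm (rho X f) Y + sm f (nabla X Y) - Delta sm ip D I J K f X Y"
    by (rule nabla_sm_r)
qed

lemma connection:
  "hypercomplex_connection sm ip rho D I J K
     (\<lambda>X Y. sm (of_real (-1/2)) (K (dorf (J Y) (I X) - J (dorf Y (I X))
                - I (dorf (J Y) X) + J (I (dorf Y X)))))"
  using nabla_connection unfolding nabla_def[abs_def] twisted_def .

end

text \<open>The three formulas are the connection of the previous section for the rotations
  (I, J, K), (J, K, I) and (K, I, J); rotating back identifies their correction terms.\<close>
theorem mainTheorem3:
  fixes sm :: "'f::{comm_ring_1,real_algebra_1} \<Rightarrow> 'e::ab_group_add \<Rightarrow> 'e"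
    and ip :: "'e \<Rightarrow> 'e \<Rightarrow> 'f" and rho :: "'e \<Rightarrow> 'f \<Rightarrow> 'f"
    and dorf :: "'e \<Rightarrow> 'e \<Rightarrow> 'e" and D :: "'f \<Rightarrow> 'e"
    and I J K :: "'e \<Rightarrow> 'e"
  assumes "courant_algebroid sm ip rho dorf D"
    and "almost_hypercomplex sm ip I J K"
  shows "(hypercomplex_connection sm ip rho D I J K
           (\<lambda>X Y. sm (of_real (-1/2)) (K (dorf (J Y) (I X) - J (dorf Y (I X))
                      - I (dorf (J Y) X) + J (I (dorf Y X)))))) \<and>
         (hypercomplex_connection sm ip rho D I J K
           (\<lambda>X Y. sm (of_real (-1/2)) (I (dorf (K Y) (J X) - K (dorf Y (J X))
                      - J (dorf (K Y) X) + K (J (dorf Y X)))))) \<and>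
         (hypercomplex_connection sm ip rho D I J K
           (\<lambda>X Y. sm (of_real (-1/2)) (J (dorf (I Y) (K X) - I (dorf Y (K X))
                      - K (dorf (I Y) X) + I (K (dorf Y X))))))"
proof -
  interpret IJK: courant_hypercomplex sm ip rho dorf D I J K
    using assms by unfold_locales
  interpret JKI: courant_hypercomplex sm ip rho dorf D J K I
    using assms(1) IJK.hypercomplex_rotate by unfold_locales
  interpret KIJ: courant_hypercomplex sm ip rho dorf D K I J
    using assms(1) JKI.hypercomplex_rotate by unfold_locales
  show ?thesis
    using IJK.connection
      hypercomplex_connection_rotate[OF hypercomplex_connection_rotate[OF JKI.connection]]
      hypercomplex_connection_rotate[OF KIJ.connection]
    by blast
qed

end
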